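(* Let $k\in\mathbb{Z}\setminus\{0\}$ and $0<x_0<1$. The complete spectrum of the eigenvalue problem $$L_k\Psi=\Phi,\qquad L_k\Phi=\mu\,\Phi,\qquad -x_0\le x\le x_0,$$ (i.e. the case $\epsilon=0$) for $\Psi$ in the space $X_0$ consists of isolated eigenvalues $\mu$ which are (i) real and strictly negative, and (ii) either simple or double, a double eigenvalue having two linearly independent eigenfunctions.
   Context: $L_k=\frac{d}{dx}\left[(1-x^2)\frac{d}{dx}\right]-\frac{k^2}{1-x^2}$. ${\cal H}_k([-x_0,x_0])$ is the space of functions with finite norm $\int_{-x_0}^{x_0}\left[(1-x^2)|\Psi'(x)|^2+\frac{k^2}{1-x^2}|\Psi(x)|^2\right]dx$ and $X_0=\{\Psi\in{\cal H}_k([-x_0,x_0]):\ \Psi(\pm x_0)=\Psi'(\pm x_0)=0\}$. A number $\mu\in\mathbb{C}$ is an eigenvalue if there is a nonzero $\Psi\in X_0$ solving the system classically on $[-x_0,x_0]$ with $\Phi=L_k\Psi$. *)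

theory Defs
  imports "HOL-Analysis.Analysis"
begin

text \<open>Eigenvalue problem  L_k Psi = Phi,  L_k Phi = mu Phi  on [-x0,x0], where
  L_k = d/dx[(1-x^2) d/dx] - k^2/(1-x^2).  A classical solution in X_0:\<close>

definition eigfun :: "int \<Rightarrow> real \<Rightarrow> complex \<Rightarrow> (real \<Rightarrow> complex) \<Rightarrow> bool" where
  "eigfun k x0 \<mu> \<Psi> \<longleftrightarrow>
     (\<exists>\<Psi>1 \<Phi> \<Phi>1.
        (\<forall>x\<in>{-x0..x0}. (\<Psi> has_vector_derivative \<Psi>1 x) (at x within {-x0..x0})) \<and>
        (\<forall>x\<in>{-x0..x0}. ((\<lambda>t. complex_of_real (1 - t\<^sup>2) * \<Psi>1 t) has_vector_derivative
             (\<Phi> x + complex_of_real ((real_of_int k)\<^sup>2 / (1 - x\<^sup>2)) * \<Psi> x)) (at x within {-x0..x0})) \<and>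
        (\<forall>x\<in>{-x0..x0}. (\<Phi> has_vector_derivative \<Phi>1 x) (at x within {-x0..x0})) \<and>
        (\<forall>x\<in>{-x0..x0}. ((\<lambda>t. complex_of_real (1 - t\<^sup>2) * \<Phi>1 t) has_vector_derivative
             (\<mu> * \<Phi> x + complex_of_real ((real_of_int k)\<^sup>2 / (1 - x\<^sup>2)) * \<Phi> x)) (at x within {-x0..x0})) \<and>
        (\<lambda>x. (1 - x\<^sup>2) * (cmod (\<Psi>1 x))\<^sup>2 + (real_of_int k)\<^sup>2 / (1 - x\<^sup>2) * (cmod (\<Psi> x))\<^sup>2)
            integrable_on {-x0..x0} \<and>
        \<Psi> (-x0) = 0 \<and> \<Psi> x0 = 0 \<and> \<Psi>1 (-x0) = 0 \<and> \<Psi>1 x0 = 0)"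

definition is_eigenvalue :: "int \<Rightarrow> real \<Rightarrow> complex \<Rightarrow> bool" where
  "is_eigenvalue k x0 \<mu> \<longleftrightarrow> (\<exists>\<Psi>. eigfun k x0 \<mu> \<Psi> \<and> (\<exists>x\<in>{-x0..x0}. \<Psi> x \<noteq> 0))"

definition simple_eigenvalue :: "int \<Rightarrow> real \<Rightarrow> complex \<Rightarrow> bool" where
  "simple_eigenvalue k x0 \<mu> \<longleftrightarrow>
     (\<exists>\<Psi>. eigfun k x0 \<mu> \<Psi> \<and> (\<exists>x\<in>{-x0..x0}. \<Psi> x \<noteq> 0) \<and>
        (\<forall>\<Theta>. eigfun k x0 \<mu> \<Theta> \<longrightarrow> (\<exists>c. \<forall>x\<in>{-x0..x0}. \<Theta> x = c * \<Psi> x)))"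

definition double_eigenvalue :: "int \<Rightarrow> real \<Rightarrow> complex \<Rightarrow> bool" where
  "double_eigenvalue k x0 \<mu> \<longleftrightarrow>
     (\<exists>\<Psi>1 \<Psi>2. eigfun k x0 \<mu> \<Psi>1 \<and> eigfun k x0 \<mu> \<Psi>2 \<and>
        (\<forall>a b. (\<forall>x\<in>{-x0..x0}. a * \<Psi>1 x + b * \<Psi>2 x = 0) \<longrightarrow> a = 0 \<and> b = 0) \<and>
        (\<forall>\<Theta>. eigfun k x0 \<mu> \<Theta> \<longrightarrow>
            (\<exists>a b. \<forall>x\<in>{-x0..x0}. \<Theta> x = a * \<Psi>1 x + b * \<Psi>2 x)))"

end

theory Submission
  imports Defs
begin

(*
  Write Phi = L_k Psi, so that an eigenfunction solves two second-order equations whose leading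
  coefficient 1 - x^2 stays away from 0 on [-x0, x0].

  Green's identity with the clamped boundary conditions gives mu * int e(Psi) + int |Phi|^2 = 0,
  where e(Psi) = (1 - x^2) |Psi'|^2 + k^2 / (1 - x^2) |Psi|^2 is the H_k energy density, which is
  positive somewhere because k <> 0. Hence mu is real and negative.

  Gronwall's inequality for the state (Phi, (1 - x^2) Phi') shows that an eigenfunction is
  determined by the Cauchy data of Phi at -x0 (those of Psi vanish there). This data is a vector
  in C^2, so every eigenspace has dimension one or two.

  If eigenvalues accumulated at mu, normalise the Cauchy data of Phi to norm 1 and pass to a
  subsequence along which they converge. Gronwall again makes the states converge uniformly.
  Eigenfunctions of distinct real eigenvalues satisfy int Phi_m conj Phi_n = 0, which forces the
  limit of the Phi_n to vanish identically. Then its derivative vanishes as well, contradicting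
  the normalisation of the limiting Cauchy data.
*)

section \<open>Calculus on a compact interval\<close>

lemma increment_ge_if_deriv_ge:
  fixes f :: "real \<Rightarrow> real"
  assumes "a \<le> b" "{a..b} \<subseteq> S"
    and deriv: "\<And>x. x \<in> {a..b} \<Longrightarrow> (f has_real_derivative f' x) (at x within S)"
    and lower: "\<And>x. a < x \<Longrightarrow> x < b \<Longrightarrow> L \<le> f' x"
  shows "L * (b - a) \<le> f b - f a"
proof (cases "a = b")
  case False
  have "\<And>x. x \<in> {a..b} \<Longrightarrow> (f has_derivative (\<lambda>h. f' x * h)) (at x within {a..b})"
    using deriv DERIV_subset[OF _ assms(2)] by (simp add: has_field_derivative_def)
  then obtain x where "x \<in> {a<..<b}" "f b - f a = f' x * (b - a)"
    using mvt_simple[of a b f "\<lambda>x h. f' x * h"] assms(1) False by auto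
  then show ?thesis
    using lower assms(1) by (simp add: mult_right_mono)
qed simp

lemma deriv_zero_if_nonneg_and_endpoints_eq:
  fixes f :: "real \<Rightarrow> real"
  assumes "a < x" "x < b"
    and deriv: "\<And>y. y \<in> {a..b} \<Longrightarrow> (f has_real_derivative f' y) (at y within {a..b})"
    and nonneg: "\<And>y. a < y \<Longrightarrow> y < b \<Longrightarrow> 0 \<le> f' y"
    and "f a = f b"
  shows "f' x = 0"
proof -
  have mono: "f u \<le> f v" if "a \<le> u" "u \<le> v" "v \<le> b" for u v
  proof -
    have "0 * (v - u) \<le> f v - f u"
      by (rule increment_ge_if_deriv_ge[where S = "{a..b}" and f' = f']) (use that deriv nonneg in auto)
    then show ?thesis
      by simp
  qed
  have "(f has_real_derivative f' x) (at x)"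
    using deriv[of x] assms(1,2) at_within_Icc_at[of a x b] by simp
  then show ?thesis
  proof (rule DERIV_local_const)
    show "0 < min (x - a) (b - x)"
      using assms(1,2) by simp
    have const: "f y = f a" if "a \<le> y" "y \<le> b" for y
    proof -
      have "f a \<le> f y" "f y \<le> f b"
        using that by (auto intro!: mono)
      then show ?thesis
        using \<open>f a = f b\<close> by linarith
    qed
    show "\<forall>y. \<bar>x - y\<bar> < min (x - a) (b - x) \<longrightarrow> f x = f y"
    proof (intro allI impI)
      fix y
      assume "\<bar>x - y\<bar> < min (x - a) (b - x)"
      then have "a \<le> y" "y \<le> b"
        by (simp_all add: abs_less_iff)
      then show "f x = f y"
        using const[of x] const[of y] assms(1,2) by simp
    qed
  qed
qed

lemma has_vector_derivative_zero_if_vanishing: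
  fixes f :: "real \<Rightarrow> 'a::real_normed_vector"
  assumes "a < b" "x \<in> {a..b}" "\<And>y. y \<in> {a..b} \<Longrightarrow> f y = 0"
    and "(f has_vector_derivative d) (at x within {a..b})"
  shows "d = 0"
proof -
  have "((\<lambda>_. 0) has_vector_derivative d) (at x within {a..b})"
    using has_vector_derivative_transform[OF assms(2) _ assms(4)] assms(3) by simp
  then show ?thesis
    using vector_derivative_unique_within_closed_interval[of a b x "\<lambda>_. 0" d 0] assms(1,2)
    by simp
qed

lemma gronwall_affine:
  fixes u :: "real \<Rightarrow> real"
  assumes "x \<in> {a..b}" "1 \<le> K" "0 \<le> c"
    and deriv: "\<And>y. y \<in> {a..b} \<Longrightarrow> (u has_real_derivative u' y) (at y within {a..b})"
    and growth: "\<And>y. y \<in> {a..b} \<Longrightarrow> u' y \<le> K * u y + c"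
  shows "u x \<le> (u a + c) * exp (K * (x - a))"
proof -
  define v where "v y = - (u y + c) * exp (- K * (y - a))" for y
  define v' where "v' y = (K * (u y + c) - u' y) * exp (- K * (y - a))" for y
  have "(v has_real_derivative v' y) (at y within {a..b})" if "y \<in> {a..b}" for y
    unfolding v_def v'_def using deriv[OF that]
    by (auto intro!: derivative_eq_intros simp: algebra_simps)
  moreover have "0 \<le> v' y" if "y \<in> {a..b}" for y
  proof -
    have "u' y \<le> K * (u y + c)"
      using growth[OF that] mult_left_mono[OF \<open>1 \<le> K\<close> \<open>0 \<le> c\<close>] by (simp add: algebra_simps)
    then show ?thesis
      by (simp add: v'_def)
  qed
  ultimately have "0 * (x - a) \<le> v x - v a"
    using assms(1) by (intro increment_ge_if_deriv_ge[where S = "{a..b}" and f' = v']) auto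
  then have "(u x + c) * exp (- K * (x - a)) \<le> u a + c"
    by (simp add: v_def algebra_simps)
  then have "(u x + c) * (exp (- K * (x - a)) * exp (K * (x - a))) \<le> (u a + c) * exp (K * (x - a))"
    unfolding mult.assoc[symmetric] by (rule mult_right_mono) simp
  then have "u x + c \<le> (u a + c) * exp (K * (x - a))"
    by (simp flip: exp_add)
  then show ?thesis
    using \<open>0 \<le> c\<close> by linarith
qed

lemma has_real_derivative_cmod_power2:
  fixes F :: "real \<Rightarrow> complex"
  assumes "(F has_vector_derivative F') (at x within S)"
  shows "((\<lambda>y. (cmod (F y))\<^sup>2) has_real_derivative 2 * Re (F' * cnj (F x))) (at x within S)"
proof -
  have "((\<lambda>y. F y * cnj (F y)) has_vector_derivative F x * cnj F' + F' * cnj (F x)) (at x within S)"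
    using has_vector_derivative_mult[OF assms has_vector_derivative_cnj[OF assms]] .
  from has_field_derivative_Re[OF this] show ?thesis
    by (simp add: complex_mult_cnj cmod_power2 algebra_simps)
qed

lemma pair_energy_deriv_le:
  fixes F G p q r :: complex
  assumes "cmod p \<le> C" "cmod q \<le> C" "cmod r \<le> \<eta>"
  shows "2 * Re (p * G * cnj F) + 2 * Re ((q * F + r) * cnj G)
    \<le> (2 * C + 1) * ((cmod F)\<^sup>2 + (cmod G)\<^sup>2) + \<eta>\<^sup>2"
proof -
  have "0 \<le> C"
    using assms(1) norm_ge_zero order_trans by blast
  have "Re (p * G * cnj F) \<le> C * (cmod G * cmod F)"
    using complex_Re_le_cmod[of "p * G * cnj F"] assms(1)
    by (simp add: norm_mult mult_right_mono mult.assoc order_trans)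
  moreover have "cmod (q * F + r) \<le> C * cmod F + \<eta>"
    using norm_triangle_ineq[of "q * F" r] assms(2,3)
    by (simp add: norm_mult add_mono mult_right_mono order_trans)
  then have "Re ((q * F + r) * cnj G) \<le> (C * cmod F + \<eta>) * cmod G"
    using complex_Re_le_cmod[of "(q * F + r) * cnj G"] by (simp add: norm_mult mult_right_mono order_trans)
  moreover have "0 \<le> C * (cmod F - cmod G)\<^sup>2" "0 \<le> (\<eta> - cmod G)\<^sup>2" "0 \<le> (cmod F)\<^sup>2"
    using \<open>0 \<le> C\<close> by simp_all
  moreover have "(2 * C + 1) * ((cmod F)\<^sup>2 + (cmod G)\<^sup>2) + \<eta>\<^sup>2
      - (2 * (C * (cmod G * cmod F)) + 2 * ((C * cmod F + \<eta>) * cmod G))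
      = 2 * (C * (cmod F - cmod G)\<^sup>2) + (\<eta> - cmod G)\<^sup>2 + (cmod F)\<^sup>2"
    by (simp add: power2_eq_square algebra_simps)
  ultimately show ?thesis
    by linarith
qed

lemma pair_energy_gronwall:
  fixes F G p q r :: "real \<Rightarrow> complex"
  assumes "x \<in> {a..b}" "0 \<le> C"
    and F: "\<And>y. y \<in> {a..b} \<Longrightarrow> (F has_vector_derivative p y * G y) (at y within {a..b})"
    and G: "\<And>y. y \<in> {a..b} \<Longrightarrow> (G has_vector_derivative q y * F y + r y) (at y within {a..b})"
    and "\<And>y. y \<in> {a..b} \<Longrightarrow> cmod (p y) \<le> C" "\<And>y. y \<in> {a..b} \<Longrightarrow> cmod (q y) \<le> C"
    and "\<And>y. y \<in> {a..b} \<Longrightarrow> cmod (r y) \<le> \<eta>"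
  shows "(cmod (F x))\<^sup>2 + (cmod (G x))\<^sup>2
    \<le> ((cmod (F a))\<^sup>2 + (cmod (G a))\<^sup>2 + \<eta>\<^sup>2) * exp ((2 * C + 1) * (x - a))"
proof (rule gronwall_affine[where u = "\<lambda>y. (cmod (F y))\<^sup>2 + (cmod (G y))\<^sup>2", OF assms(1)])
  fix y
  assume y: "y \<in> {a..b}"
  show "((\<lambda>y. (cmod (F y))\<^sup>2 + (cmod (G y))\<^sup>2) has_real_derivative
      2 * Re (p y * G y * cnj (F y)) + 2 * Re ((q y * F y + r y) * cnj (G y))) (at y within {a..b})"
    by (intro DERIV_add has_real_derivative_cmod_power2 F G y)
  show "2 * Re (p y * G y * cnj (F y)) + 2 * Re ((q y * F y + r y) * cnj (G y))
      \<le> (2 * C + 1) * ((cmod (F y))\<^sup>2 + (cmod (G y))\<^sup>2) + \<eta>\<^sup>2"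
    by (rule pair_energy_deriv_le) (use assms y in auto)
qed (use assms in auto)

lemma LIMSEQ_distinct_terms:
  fixes X :: "nat \<Rightarrow> 'a::metric_space"
  assumes "X \<longlonglongrightarrow> l" "\<And>n. X n \<noteq> l"
  shows "\<exists>m\<ge>N. \<exists>n\<ge>N. X m \<noteq> X n"
proof -
  have "0 < dist (X N) l"
    using assms(2) by simp
  then obtain n0 where "\<forall>n\<ge>n0. dist (X n) l < dist (X N) l"
    using assms(1) unfolding lim_sequentially by blast
  then have "dist (X (max n0 N)) l < dist (X N) l"
    by simp
  then have "X (max n0 N) \<noteq> X N"
    by (metis less_irrefl)
  then show ?thesis
    by (intro exI[of _ "max n0 N"] conjI exI[of _ N]) simp_all
qed

lemma uniformly_Cauchy_on_if_dominated:
  fixes X :: "nat \<Rightarrow> 'a \<Rightarrow> 'b::metric_space" and a :: "nat \<Rightarrow> 'c::metric_space" and b :: "nat \<Rightarrow> 'd::metric_space"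
  assumes "Cauchy a" "Cauchy b"
    and dominated: "\<And>m n x. x \<in> S \<Longrightarrow> dist (X m x) (X n x) \<le> C * dist (a m) (a n) + D * dist (b m) (b n)"
  shows "uniformly_Cauchy_on S X"
proof (rule uniformly_Cauchy_onI)
  fix e :: real
  assume "0 < e"
  define K where "K = \<bar>C\<bar> + \<bar>D\<bar> + 1"
  have "0 < e / K"
    using \<open>0 < e\<close> by (simp add: K_def add_pos_nonneg)
  then obtain Ma Mb where Ma: "\<forall>m\<ge>Ma. \<forall>n\<ge>Ma. dist (a m) (a n) < e / K"
    and Mb: "\<forall>m\<ge>Mb. \<forall>n\<ge>Mb. dist (b m) (b n) < e / K"
    using assms(1,2) unfolding Cauchy_def by meson
  have scale: "c * t \<le> \<bar>c\<bar> * (e / K)" if "t < e / K" "0 \<le> t" for c t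
    using mult_right_mono[OF abs_ge_self[of c] that(2)] mult_left_mono[OF less_imp_le[OF that(1)] abs_ge_zero[of c]]
    by linarith
  have "dist (X m x) (X n x) < e" if "x \<in> S" "max Ma Mb \<le> m" "max Ma Mb \<le> n" for m n x
  proof -
    have "dist (a m) (a n) < e / K" "dist (b m) (b n) < e / K"
      using Ma Mb that by auto
    then have "C * dist (a m) (a n) \<le> \<bar>C\<bar> * (e / K)" "D * dist (b m) (b n) \<le> \<bar>D\<bar> * (e / K)"
      by (meson scale zero_le_dist)+
    then have "dist (X m x) (X n x) \<le> (\<bar>C\<bar> + \<bar>D\<bar>) * (e / K)"
      using dominated[OF that(1), of m n] distrib_right[of "\<bar>C\<bar>" "\<bar>D\<bar>" "e / K"] by linarith
    also have "\<dots> < K * (e / K)"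
      using \<open>0 < e / K\<close> by (intro mult_strict_right_mono) (simp_all add: K_def)
    finally show ?thesis
      by (simp add: K_def add_pos_nonneg)
  qed
  then show "\<exists>M. \<forall>x\<in>S. \<forall>m\<ge>M. \<forall>n\<ge>M. dist (X m x) (X n x) < e"
    by blast
qed

lemma has_vector_derivative_uniform_limit:
  fixes f f' :: "nat \<Rightarrow> real \<Rightarrow> 'a::banach"
  assumes "convex S"
    and deriv: "\<And>n x. x \<in> S \<Longrightarrow> (f n has_vector_derivative f' n x) (at x within S)"
    and lim': "uniform_limit S f' g' sequentially"
    and "x0 \<in> S" "(\<lambda>n. f n x0) \<longlonglongrightarrow> l"
  shows "\<exists>g. \<forall>x\<in>S. (\<lambda>n. f n x) \<longlonglongrightarrow> g x \<and> (g has_vector_derivative g' x) (at x within S)"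
  unfolding has_vector_derivative_def
proof (rule has_derivative_sequence[where f' = "\<lambda>n x h. h *\<^sub>R f' n x" and g' = "\<lambda>x h. h *\<^sub>R g' x"])
  show "convex S" "x0 \<in> S" "(\<lambda>n. f n x0) \<longlonglongrightarrow> l"
    by fact+
  show "\<And>n x. x \<in> S \<Longrightarrow> (f n has_derivative (\<lambda>h. h *\<^sub>R f' n x)) (at x within S)"
    using deriv unfolding has_vector_derivative_def by blast
  fix e :: real
  assume "0 < e"
  with lim' show "\<forall>\<^sub>F n in sequentially. \<forall>x\<in>S. \<forall>h. norm (h *\<^sub>R f' n x - h *\<^sub>R g' x) \<le> e * norm h"
  proof (rule uniform_limitD[THEN eventually_mono], intro ballI allI)
    fix n x h
    assume "\<forall>x\<in>S. dist (f' n x) (g' x) < e" "x \<in> S"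
    then have "\<bar>h\<bar> * norm (f' n x - g' x) \<le> \<bar>h\<bar> * e"
      by (simp add: dist_norm mult_left_mono less_imp_le)
    then show "norm (h *\<^sub>R f' n x - h *\<^sub>R g' x) \<le> e * norm h"
      by (simp add: mult.commute flip: scaleR_diff_right)
  qed
qed

lemma uniform_limit_orthogonal_imp_zero:
  fixes F :: "nat \<Rightarrow> real \<Rightarrow> complex"
  assumes "a < b" and lim: "uniform_limit {a..b} F g sequentially"
    and cont: "\<And>n. continuous_on {a..b} (F n)"
    and orth: "\<And>N. \<exists>m\<ge>N. \<exists>n\<ge>N. ((\<lambda>x. F m x * cnj (F n x)) has_integral 0) {a..b}"
    and "x \<in> {a..b}"
  shows "g x = 0"
proof -
  obtain m n where mn: "\<And>N. N \<le> m N" "\<And>N. N \<le> n N"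
    and orth_mn: "\<And>N. ((\<lambda>x. F (m N) x * cnj (F (n N) x)) has_integral 0) {a..b}"
    using orth by metis
  have "filterlim m sequentially sequentially" "filterlim n sequentially sequentially"
    using mn by (auto intro: filterlim_at_top_mono[OF filterlim_ident])
  then have lim_m: "uniform_limit {a..b} (\<lambda>N. F (m N)) g sequentially"
    and lim_n: "uniform_limit {a..b} (\<lambda>N. F (n N)) g sequentially"
    by (auto intro: filterlim_compose[OF lim])
  have cont_g: "continuous_on {a..b} g"
    by (rule uniform_limit_theorem[OF _ lim]) (simp_all add: cont)
  then have "bounded (g ` {a..b})" "bounded ((\<lambda>x. cnj (g x)) ` {a..b})"
    by (auto intro!: compact_imp_bounded compact_continuous_image continuous_intros)
  then have "uniform_limit {a..b} (\<lambda>N x. F (m N) x * cnj (F (n N) x)) (\<lambda>x. g x * cnj (g x)) sequentially"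
    by (intro uniform_lim_mult lim_m bounded_linear.uniform_limit[OF bounded_linear_cnj lim_n])
  then obtain I J where "\<And>N. ((\<lambda>x. F (m N) x * cnj (F (n N) x)) has_integral I N) {a..b}"
    and J: "((\<lambda>x. g x * cnj (g x)) has_integral J) {a..b}" "I \<longlonglongrightarrow> J"
    by (rule uniform_limit_integral) (auto intro!: continuous_intros cont)
  then have "I = (\<lambda>N. 0)"
    using orth_mn has_integral_unique by blast
  then have "J = 0"
    using J(2) LIMSEQ_const_iff by metis
  then have "((\<lambda>x. (cmod (g x))\<^sup>2) has_integral 0) (cbox a b)"
    using has_integral_linear[OF J(1) bounded_linear_Re]
    by (simp add: o_def complex_mult_cnj cmod_power2)
  then have "(cmod (g x))\<^sup>2 = 0"
    using assms(1,5) cont_g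
    by (intro has_integral_0_cbox_imp_0[where f = "\<lambda>x. (cmod (g x))\<^sup>2"]) (auto intro!: continuous_intros)
  then show ?thesis
    by simp
qed

section \<open>The operator L_k on [-x0, x0]\<close>

lemma one_minus_power2_bounds:
  fixes x x0 :: real
  assumes "x0 < 1" "x \<in> {-x0..x0}"
  shows "0 < 1 - x0\<^sup>2" "1 - x0\<^sup>2 \<le> 1 - x\<^sup>2"
proof -
  have "0 \<le> x0" "\<bar>x\<bar> \<le> x0"
    using assms(2) by auto
  then have "x\<^sup>2 \<le> x0\<^sup>2" "x0\<^sup>2 < 1"
    using assms(1) abs_le_square_iff[of x x0] by (auto simp: power_less_one_iff abs_if)
  then show "0 < 1 - x0\<^sup>2" "1 - x0\<^sup>2 \<le> 1 - x\<^sup>2"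
    by simp_all
qed

definition solves_Lk :: "int \<Rightarrow> real \<Rightarrow> (real \<Rightarrow> complex) \<Rightarrow> (real \<Rightarrow> complex) \<Rightarrow> (real \<Rightarrow> complex) \<Rightarrow> bool"
  where "solves_Lk k x0 f f' g \<longleftrightarrow> (\<forall>x\<in>{-x0..x0}.
    (f has_vector_derivative f' x) (at x within {-x0..x0}) \<and>
    ((\<lambda>t. complex_of_real (1 - t\<^sup>2) * f' t) has_vector_derivative
      g x + complex_of_real ((real_of_int k)\<^sup>2 / (1 - x\<^sup>2)) * f x) (at x within {-x0..x0}))"

definition Lk_system :: "int \<Rightarrow> real \<Rightarrow> complex \<Rightarrow> (real \<Rightarrow> complex) \<Rightarrow> (real \<Rightarrow> complex)
    \<Rightarrow> (real \<Rightarrow> complex) \<Rightarrow> (real \<Rightarrow> complex) \<Rightarrow> bool"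
  where "Lk_system k x0 \<mu> \<Psi> \<Psi>' \<Phi> \<Phi>' \<longleftrightarrow> solves_Lk k x0 \<Psi> \<Psi>' \<Phi> \<and> solves_Lk k x0 \<Phi> \<Phi>' (\<lambda>x. \<mu> * \<Phi> x)"

definition eigen_solution :: "int \<Rightarrow> real \<Rightarrow> complex \<Rightarrow> (real \<Rightarrow> complex) \<Rightarrow> (real \<Rightarrow> complex)
    \<Rightarrow> (real \<Rightarrow> complex) \<Rightarrow> (real \<Rightarrow> complex) \<Rightarrow> bool"
  where "eigen_solution k x0 \<mu> \<Psi> \<Psi>' \<Phi> \<Phi>' \<longleftrightarrow> Lk_system k x0 \<mu> \<Psi> \<Psi>' \<Phi> \<Phi>' \<and>
    \<Psi> (-x0) = 0 \<and> \<Psi> x0 = 0 \<and> \<Psi>' (-x0) = 0 \<and> \<Psi>' x0 = 0"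

lemma eigfun_imp_eigen_solution:
  assumes "eigfun k x0 \<mu> \<Psi>"
  obtains \<Psi>' \<Phi> \<Phi>' where "eigen_solution k x0 \<mu> \<Psi> \<Psi>' \<Phi> \<Phi>'"
  using assms unfolding eigfun_def eigen_solution_def Lk_system_def solves_Lk_def by blast

definition Lk_state :: "(real \<Rightarrow> complex) \<Rightarrow> (real \<Rightarrow> complex) \<Rightarrow> real \<Rightarrow> complex \<times> complex"
  where "Lk_state f f' x = (f x, complex_of_real (1 - x\<^sup>2) * f' x)"

lemma norm_Lk_state_power2:
  "(norm (Lk_state f f' x))\<^sup>2 = (cmod (f x))\<^sup>2 + (cmod (complex_of_real (1 - x\<^sup>2) * f' x))\<^sup>2"
  by (simp add: Lk_state_def norm_Pair)

definition Lk_coeff_bound :: "int \<Rightarrow> real \<Rightarrow> real \<Rightarrow> real"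
  where "Lk_coeff_bound k x0 M = (1 + (real_of_int k)\<^sup>2) / (1 - x0\<^sup>2) + M"

lemma Lk_coeff_bounds:
  assumes "x0 < 1" "x \<in> {-x0..x0}" "cmod \<mu> \<le> M"
  shows "cmod (complex_of_real (1 / (1 - x\<^sup>2))) \<le> Lk_coeff_bound k x0 M"
    and "cmod (\<mu> + complex_of_real ((real_of_int k)\<^sup>2 / (1 - x\<^sup>2))) \<le> Lk_coeff_bound k x0 M"
proof -
  note w = one_minus_power2_bounds[OF assms(1,2)]
  have "0 \<le> M"
    using assms(3) norm_ge_zero order_trans by blast
  have "1 / (1 - x\<^sup>2) \<le> 1 / (1 - x0\<^sup>2)"
    using w by (simp add: frac_le)
  moreover have "(real_of_int k)\<^sup>2 / (1 - x\<^sup>2) \<le> (real_of_int k)\<^sup>2 / (1 - x0\<^sup>2)"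
    using w by (simp add: frac_le)
  moreover have "cmod (complex_of_real (1 / (1 - x\<^sup>2))) = 1 / (1 - x\<^sup>2)"
    "cmod (complex_of_real ((real_of_int k)\<^sup>2 / (1 - x\<^sup>2))) = (real_of_int k)\<^sup>2 / (1 - x\<^sup>2)"
    using w by (simp_all only: norm_of_real) simp_all
  moreover have "0 \<le> 1 / (1 - x\<^sup>2)" "0 \<le> (real_of_int k)\<^sup>2 / (1 - x\<^sup>2)"
    using w by simp_all
  moreover have "(1 + (real_of_int k)\<^sup>2) / (1 - x0\<^sup>2) = 1 / (1 - x0\<^sup>2) + (real_of_int k)\<^sup>2 / (1 - x0\<^sup>2)"
    by (simp add: add_divide_distrib)
  ultimately show "cmod (complex_of_real (1 / (1 - x\<^sup>2))) \<le> Lk_coeff_bound k x0 M"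
    and "cmod (\<mu> + complex_of_real ((real_of_int k)\<^sup>2 / (1 - x\<^sup>2))) \<le> Lk_coeff_bound k x0 M"
    using \<open>0 \<le> M\<close> assms(3) norm_triangle_ineq[of \<mu> "complex_of_real ((real_of_int k)\<^sup>2 / (1 - x\<^sup>2))"]
    unfolding Lk_coeff_bound_def by linarith+
qed

lemma solves_Lk_has_vector_derivative:
  assumes "x0 < 1" "solves_Lk k x0 f f' g" "x \<in> {-x0..x0}"
  shows "(f has_vector_derivative complex_of_real (1 / (1 - x\<^sup>2)) * (complex_of_real (1 - x\<^sup>2) * f' x))
    (at x within {-x0..x0})"
proof -
  have "1 / (1 - x\<^sup>2) * (1 - x\<^sup>2) = 1"
    using one_minus_power2_bounds[OF assms(1,3)] by simp
  then have "complex_of_real (1 / (1 - x\<^sup>2)) * (complex_of_real (1 - x\<^sup>2) * f' x) = f' x"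
    by (simp only: mult.assoc[symmetric] of_real_mult[symmetric] of_real_1 mult_1_left)
  then show ?thesis
    using assms(2,3) by (simp add: solves_Lk_def)
qed

definition Lk_growth :: "int \<Rightarrow> real \<Rightarrow> real \<Rightarrow> real"
  where "Lk_growth k x0 M = exp ((2 * Lk_coeff_bound k x0 M + 1) * (2 * x0))"

lemma solves_Lk_state_bound:
  assumes "x0 < 1" "solves_Lk k x0 f f' g" "cmod \<mu> \<le> M"
    and deviation: "\<And>x. x \<in> {-x0..x0} \<Longrightarrow> cmod (g x - \<mu> * f x) \<le> \<eta>"
    and x: "x \<in> {-x0..x0}"
  shows "(norm (Lk_state f f' x))\<^sup>2 \<le> ((norm (Lk_state f f' (-x0)))\<^sup>2 + \<eta>\<^sup>2) * Lk_growth k x0 M"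
proof -
  have "0 \<le> Lk_coeff_bound k x0 M"
    using Lk_coeff_bounds(1)[OF assms(1) x assms(3)] norm_ge_zero order_trans by blast
  have "(cmod (f x))\<^sup>2 + (cmod (complex_of_real (1 - x\<^sup>2) * f' x))\<^sup>2
      \<le> ((cmod (f (-x0)))\<^sup>2 + (cmod (complex_of_real (1 - (-x0)\<^sup>2) * f' (-x0)))\<^sup>2 + \<eta>\<^sup>2)
        * exp ((2 * Lk_coeff_bound k x0 M + 1) * (x - (-x0)))"
  proof (rule pair_energy_gronwall[OF x \<open>0 \<le> Lk_coeff_bound k x0 M\<close>])
    fix y
    assume y: "y \<in> {-x0..x0}"
    show "(f has_vector_derivative
        complex_of_real (1 / (1 - y\<^sup>2)) * (complex_of_real (1 - y\<^sup>2) * f' y)) (at y within {-x0..x0})"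
      using solves_Lk_has_vector_derivative[OF assms(1,2) y] .
    show "((\<lambda>t. complex_of_real (1 - t\<^sup>2) * f' t) has_vector_derivative
        (\<mu> + complex_of_real ((real_of_int k)\<^sup>2 / (1 - y\<^sup>2))) * f y + (g y - \<mu> * f y)) (at y within {-x0..x0})"
      using assms(2) y by (simp add: solves_Lk_def algebra_simps)
    show "cmod (complex_of_real (1 / (1 - y\<^sup>2))) \<le> Lk_coeff_bound k x0 M"
      "cmod (\<mu> + complex_of_real ((real_of_int k)\<^sup>2 / (1 - y\<^sup>2))) \<le> Lk_coeff_bound k x0 M"
      using Lk_coeff_bounds[OF assms(1) y assms(3)] by simp_all
    show "cmod (g y - \<mu> * f y) \<le> \<eta>"
      using deviation[OF y] .
  qed
  also have "\<dots> \<le> ((cmod (f (-x0)))\<^sup>2 + (cmod (complex_of_real (1 - (-x0)\<^sup>2) * f' (-x0)))\<^sup>2 + \<eta>\<^sup>2)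
      * Lk_growth k x0 M"
    unfolding Lk_growth_def using x \<open>0 \<le> Lk_coeff_bound k x0 M\<close>
    by (intro mult_left_mono) auto
  finally show ?thesis
    by (simp add: norm_Lk_state_power2)
qed

lemma solves_Lk_unique:
  assumes "x0 < 1" "solves_Lk k x0 f f' g" "\<And>x. x \<in> {-x0..x0} \<Longrightarrow> g x = \<mu> * f x"
    and "f (-x0) = 0" "f' (-x0) = 0" "x \<in> {-x0..x0}"
  shows "f x = 0"
proof -
  have "(norm (Lk_state f f' x))\<^sup>2 \<le> ((norm (Lk_state f f' (-x0)))\<^sup>2 + 0\<^sup>2) * Lk_growth k x0 (cmod \<mu>)"
    by (rule solves_Lk_state_bound[where g = g]) (use assms in auto)
  then have "Lk_state f f' x = 0"
    using assms(4,5) by (simp add: Lk_state_def)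
  then show ?thesis
    by (simp add: Lk_state_def zero_prod_def)
qed

lemma Lk_system_unique:
  assumes "x0 < 1" "Lk_system k x0 \<mu> \<Psi> \<Psi>' \<Phi> \<Phi>'"
    and "\<Psi> (-x0) = 0" "\<Psi>' (-x0) = 0" "\<Phi> (-x0) = 0" "\<Phi>' (-x0) = 0" "x \<in> {-x0..x0}"
  shows "\<Psi> x = 0"
proof -
  have \<Phi>: "solves_Lk k x0 \<Phi> \<Phi>' (\<lambda>x. \<mu> * \<Phi> x)" and \<Psi>: "solves_Lk k x0 \<Psi> \<Psi>' \<Phi>"
    using assms(2) unfolding Lk_system_def by auto
  have "\<Phi> y = 0" if "y \<in> {-x0..x0}" for y
    by (rule solves_Lk_unique[OF assms(1) \<Phi> _ assms(5,6) that, where \<mu> = \<mu>]) simp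
  then show ?thesis
    by (intro solves_Lk_unique[OF assms(1) \<Psi> _ assms(3,4,7), where \<mu> = 0]) simp
qed

lemma solves_Lk_vanishing:
  assumes "0 < x0" "solves_Lk k x0 f f' g" "\<And>x. x \<in> {-x0..x0} \<Longrightarrow> f x = 0" "x \<in> {-x0..x0}"
  shows "f' x = 0" "g x = 0"
proof -
  have ab: "-x0 < x0"
    using assms(1) by simp
  have f: "(f has_vector_derivative f' y) (at y within {-x0..x0})"
    "((\<lambda>t. complex_of_real (1 - t\<^sup>2) * f' t) has_vector_derivative
      g y + complex_of_real ((real_of_int k)\<^sup>2 / (1 - y\<^sup>2)) * f y) (at y within {-x0..x0})"
    if "y \<in> {-x0..x0}" for y
    using assms(2) that unfolding solves_Lk_def by auto
  have f'0: "f' y = 0" if "y \<in> {-x0..x0}" for y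
    using has_vector_derivative_zero_if_vanishing[OF ab that assms(3) f(1)[OF that]] .
  then show "f' x = 0"
    using assms(4) .
  have "g x + complex_of_real ((real_of_int k)\<^sup>2 / (1 - x\<^sup>2)) * f x = 0"
    by (rule has_vector_derivative_zero_if_vanishing[OF ab assms(4) _ f(2)[OF assms(4)]])
      (simp add: f'0)
  then show "g x = 0"
    using assms(3,4) by simp
qed

lemma Lk_system_vanishing:
  assumes "0 < x0" "Lk_system k x0 \<mu> \<Psi> \<Psi>' \<Phi> \<Phi>'" "\<And>x. x \<in> {-x0..x0} \<Longrightarrow> \<Psi> x = 0"
    and "x \<in> {-x0..x0}"
  shows "\<Phi> x = 0" "\<Phi>' x = 0"
proof -
  have \<Psi>: "solves_Lk k x0 \<Psi> \<Psi>' \<Phi>" and \<Phi>: "solves_Lk k x0 \<Phi> \<Phi>' (\<lambda>x. \<mu> * \<Phi> x)"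
    using assms(2) unfolding Lk_system_def by auto
  have \<Phi>0: "\<Phi> y = 0" if "y \<in> {-x0..x0}" for y
    using solves_Lk_vanishing(2)[OF assms(1) \<Psi> assms(3) that] .
  then show "\<Phi> x = 0"
    using assms(4) .
  show "\<Phi>' x = 0"
    using solves_Lk_vanishing(1)[OF assms(1) \<Phi> \<Phi>0 assms(4)] .
qed

lemma solves_Lk_lincomb:
  assumes f: "solves_Lk k x0 f f' g" and h: "solves_Lk k x0 h h' j"
  shows "solves_Lk k x0 (\<lambda>x. a * f x + b * h x) (\<lambda>x. a * f' x + b * h' x) (\<lambda>x. a * g x + b * j x)"
  unfolding solves_Lk_def
proof (intro ballI conjI)
  fix x
  assume x: "x \<in> {-x0..x0}"
  show "((\<lambda>x. a * f x + b * h x) has_vector_derivative a * f' x + b * h' x) (at x within {-x0..x0})"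
    using f h x unfolding solves_Lk_def
    by (intro has_vector_derivative_add has_vector_derivative_mult_right) auto
  have eq: "(\<lambda>t. complex_of_real (1 - t\<^sup>2) * (a * f' t + b * h' t))
      = (\<lambda>t. a * (complex_of_real (1 - t\<^sup>2) * f' t) + b * (complex_of_real (1 - t\<^sup>2) * h' t))"
    by (simp add: algebra_simps)
  have "((\<lambda>t. a * (complex_of_real (1 - t\<^sup>2) * f' t) + b * (complex_of_real (1 - t\<^sup>2) * h' t))
      has_vector_derivative a * (g x + complex_of_real ((real_of_int k)\<^sup>2 / (1 - x\<^sup>2)) * f x)
        + b * (j x + complex_of_real ((real_of_int k)\<^sup>2 / (1 - x\<^sup>2)) * h x)) (at x within {-x0..x0})"
    using f h x unfolding solves_Lk_def
    by (intro has_vector_derivative_add has_vector_derivative_mult_right) auto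
  then show "((\<lambda>t. complex_of_real (1 - t\<^sup>2) * (a * f' t + b * h' t)) has_vector_derivative
      a * g x + b * j x + complex_of_real ((real_of_int k)\<^sup>2 / (1 - x\<^sup>2)) * (a * f x + b * h x))
      (at x within {-x0..x0})"
    unfolding eq by (rule has_vector_derivative_eq_rhs) (simp only: distrib_left add_ac mult.left_commute)
qed

lemma Lk_system_lincomb:
  assumes "Lk_system k x0 \<mu> \<Psi> \<Psi>' \<Phi> \<Phi>'" "Lk_system k x0 \<mu> \<Theta> \<Theta>' \<Xi> \<Xi>'"
  shows "Lk_system k x0 \<mu> (\<lambda>x. a * \<Psi> x + b * \<Theta> x) (\<lambda>x. a * \<Psi>' x + b * \<Theta>' x)
    (\<lambda>x. a * \<Phi> x + b * \<Xi> x) (\<lambda>x. a * \<Phi>' x + b * \<Xi>' x)"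
proof -
  have "(\<lambda>x. a * (\<mu> * \<Phi> x) + b * (\<mu> * \<Xi> x)) = (\<lambda>x. \<mu> * (a * \<Phi> x + b * \<Xi> x))"
    by (simp add: algebra_simps)
  then show ?thesis
    using assms solves_Lk_lincomb[of k x0 \<Psi> \<Psi>' \<Phi> \<Theta> \<Theta>' \<Xi> a b]
      solves_Lk_lincomb[of k x0 \<Phi> \<Phi>' "\<lambda>x. \<mu> * \<Phi> x" \<Xi> \<Xi>' "\<lambda>x. \<mu> * \<Xi> x" a b]
    unfolding Lk_system_def by simp
qed

definition Lk_bracket :: "(real \<Rightarrow> complex) \<Rightarrow> (real \<Rightarrow> complex) \<Rightarrow> (real \<Rightarrow> complex) \<Rightarrow> (real \<Rightarrow> complex)
    \<Rightarrow> real \<Rightarrow> complex"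
  where "Lk_bracket f f' h h' t =
    complex_of_real (1 - t\<^sup>2) * f' t * cnj (h t) - f t * cnj (complex_of_real (1 - t\<^sup>2) * h' t)"

lemma solves_Lk_Lagrange_identity:
  assumes "solves_Lk k x0 f f' g" "solves_Lk k x0 h h' j" "x \<in> {-x0..x0}"
  shows "(Lk_bracket f f' h h' has_vector_derivative g x * cnj (h x) - f x * cnj (j x)) (at x within {-x0..x0})"
proof -
  have f: "(f has_vector_derivative f' x) (at x within {-x0..x0})"
    "((\<lambda>t. complex_of_real (1 - t\<^sup>2) * f' t) has_vector_derivative
      g x + complex_of_real ((real_of_int k)\<^sup>2 / (1 - x\<^sup>2)) * f x) (at x within {-x0..x0})"
    and h: "(h has_vector_derivative h' x) (at x within {-x0..x0})"
    "((\<lambda>t. complex_of_real (1 - t\<^sup>2) * h' t) has_vector_derivative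
      j x + complex_of_real ((real_of_int k)\<^sup>2 / (1 - x\<^sup>2)) * h x) (at x within {-x0..x0})"
    using assms unfolding solves_Lk_def by auto
  show ?thesis
    unfolding Lk_bracket_def[abs_def]
    by (rule has_vector_derivative_eq_rhs[OF has_vector_derivative_diff[OF
          has_vector_derivative_mult[OF f(2) has_vector_derivative_cnj[OF h(1)]]
          has_vector_derivative_mult[OF f(1) has_vector_derivative_cnj[OF h(2)]]]])
      (simp add: algebra_simps)
qed

definition Hk_density :: "int \<Rightarrow> (real \<Rightarrow> complex) \<Rightarrow> (real \<Rightarrow> complex) \<Rightarrow> real \<Rightarrow> real"
  where "Hk_density k f f' x = (1 - x\<^sup>2) * (cmod (f' x))\<^sup>2 + (real_of_int k)\<^sup>2 / (1 - x\<^sup>2) * (cmod (f x))\<^sup>2"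

lemma Hk_density_nonneg:
  assumes "x0 < 1" "x \<in> {-x0..x0}"
  shows "0 \<le> Hk_density k f f' x"
  using one_minus_power2_bounds[OF assms] unfolding Hk_density_def by simp

lemma Hk_density_pos:
  assumes "x0 < 1" "x \<in> {-x0..x0}" "k \<noteq> 0" "f x \<noteq> 0"
  shows "0 < Hk_density k f f' x"
proof -
  have "0 < 1 - x\<^sup>2"
    using one_minus_power2_bounds[OF assms(1,2)] by linarith
  then have "0 < (real_of_int k)\<^sup>2 / (1 - x\<^sup>2) * (cmod (f x))\<^sup>2"
    using assms(3,4) by simp
  moreover have "0 \<le> (1 - x\<^sup>2) * (cmod (f' x))\<^sup>2"
    using \<open>0 < 1 - x\<^sup>2\<close> by simp
  ultimately show ?thesis
    unfolding Hk_density_def by linarith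
qed

lemma solves_Lk_energy_identity:
  assumes "solves_Lk k x0 f f' g" "x \<in> {-x0..x0}"
  shows "((\<lambda>t. complex_of_real (1 - t\<^sup>2) * f' t * cnj (f t)) has_vector_derivative
    g x * cnj (f x) + complex_of_real (Hk_density k f f' x)) (at x within {-x0..x0})"
proof -
  have f: "(f has_vector_derivative f' x) (at x within {-x0..x0})"
    "((\<lambda>t. complex_of_real (1 - t\<^sup>2) * f' t) has_vector_derivative
      g x + complex_of_real ((real_of_int k)\<^sup>2 / (1 - x\<^sup>2)) * f x) (at x within {-x0..x0})"
    using assms unfolding solves_Lk_def by auto
  have "complex_of_real (Hk_density k f f' x) = complex_of_real (1 - x\<^sup>2) * (f' x * cnj (f' x))
      + complex_of_real ((real_of_int k)\<^sup>2 / (1 - x\<^sup>2)) * (f x * cnj (f x))"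
    unfolding Hk_density_def by (simp only: of_real_add of_real_mult complex_norm_square)
  then show ?thesis
    by (intro has_vector_derivative_eq_rhs[OF
        has_vector_derivative_mult[OF f(2) has_vector_derivative_cnj[OF f(1)]]])
      (simp add: algebra_simps)
qed

section \<open>Eigenvalues are real and negative\<close>

(* Green's identity without integrals: as D vanishes at both ends, mu * int e(Psi) + int |Phi|^2 = 0. *)
lemma eigen_solution_Green_antiderivative:
  assumes "eigen_solution k x0 \<mu> \<Psi> \<Psi>' \<Phi> \<Phi>'"
  obtains D where
    "\<And>x. x \<in> {-x0..x0} \<Longrightarrow>
      (D has_vector_derivative \<mu> * complex_of_real (Hk_density k \<Psi> \<Psi>' x) + complex_of_real ((cmod (\<Phi> x))\<^sup>2))
        (at x within {-x0..x0})"
    "D (-x0) = 0" "D x0 = 0"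
proof -
  have \<Psi>: "solves_Lk k x0 \<Psi> \<Psi>' \<Phi>" and \<Phi>: "solves_Lk k x0 \<Phi> \<Phi>' (\<lambda>x. \<mu> * \<Phi> x)"
    and bc: "\<Psi> (-x0) = 0" "\<Psi> x0 = 0" "\<Psi>' (-x0) = 0" "\<Psi>' x0 = 0"
    using assms unfolding eigen_solution_def Lk_system_def by auto
  define D where "D t = \<mu> * (complex_of_real (1 - t\<^sup>2) * \<Psi>' t * cnj (\<Psi> t)) - Lk_bracket \<Phi> \<Phi>' \<Psi> \<Psi>' t" for t
  have "(D has_vector_derivative \<mu> * (\<Phi> x * cnj (\<Psi> x) + complex_of_real (Hk_density k \<Psi> \<Psi>' x))
      - (\<mu> * \<Phi> x * cnj (\<Psi> x) - \<Phi> x * cnj (\<Phi> x))) (at x within {-x0..x0})" if "x \<in> {-x0..x0}" for x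
    unfolding D_def[abs_def]
    by (intro has_vector_derivative_diff has_vector_derivative_mult_right
        solves_Lk_energy_identity[OF \<Psi> that] solves_Lk_Lagrange_identity[OF \<Phi> \<Psi> that, simplified])
  moreover have "\<mu> * (\<Phi> x * cnj (\<Psi> x) + complex_of_real (Hk_density k \<Psi> \<Psi>' x))
      - (\<mu> * \<Phi> x * cnj (\<Psi> x) - \<Phi> x * cnj (\<Phi> x))
      = \<mu> * complex_of_real (Hk_density k \<Psi> \<Psi>' x) + complex_of_real ((cmod (\<Phi> x))\<^sup>2)" for x
    unfolding complex_norm_square by (simp add: algebra_simps)
  ultimately show ?thesis
    using that[of D] bc by (simp add: D_def Lk_bracket_def)
qed

lemma eigen_solution_nonzero_interior:
  assumes "eigen_solution k x0 \<mu> \<Psi> \<Psi>' \<Phi> \<Phi>'" "x1 \<in> {-x0..x0}" "\<Psi> x1 \<noteq> 0"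
  shows "-x0 < x1" "x1 < x0"
proof -
  have "x1 \<noteq> -x0" "x1 \<noteq> x0"
    using assms(1,3) unfolding eigen_solution_def by auto
  then show "-x0 < x1" "x1 < x0"
    using assms(2) by auto
qed

lemma eigen_solution_eigenvalue_real:
  assumes "x0 < 1" "k \<noteq> 0" and sol: "eigen_solution k x0 \<mu> \<Psi> \<Psi>' \<Phi> \<Phi>'"
    and x1: "x1 \<in> {-x0..x0}" "\<Psi> x1 \<noteq> 0"
  shows "Im \<mu> = 0"
proof -
  obtain D where D: "\<And>x. x \<in> {-x0..x0} \<Longrightarrow>
      (D has_vector_derivative \<mu> * complex_of_real (Hk_density k \<Psi> \<Psi>' x) + complex_of_real ((cmod (\<Phi> x))\<^sup>2))
        (at x within {-x0..x0})"
    and "D (-x0) = 0" "D x0 = 0"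
    using eigen_solution_Green_antiderivative[OF sol] by metis
  have "(Im \<mu>)\<^sup>2 * Hk_density k \<Psi> \<Psi>' x1 = 0"
  proof (rule deriv_zero_if_nonneg_and_endpoints_eq[OF eigen_solution_nonzero_interior[OF sol x1],
        where f = "\<lambda>t. Im \<mu> * Im (D t)"])
    show "((\<lambda>t. Im \<mu> * Im (D t)) has_real_derivative (Im \<mu>)\<^sup>2 * Hk_density k \<Psi> \<Psi>' y)
        (at y within {-x0..x0})" if "y \<in> {-x0..x0}" for y
    proof -
      have "((\<lambda>t. Im (D t)) has_real_derivative Im \<mu> * Hk_density k \<Psi> \<Psi>' y) (at y within {-x0..x0})"
        using has_field_derivative_Im[OF D[OF that]] by simp
      from DERIV_cmult[OF this, of "Im \<mu>"] show ?thesis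
        by (simp add: power2_eq_square mult.assoc)
    qed
    show "0 \<le> (Im \<mu>)\<^sup>2 * Hk_density k \<Psi> \<Psi>' y" if "-x0 < y" "y < x0" for y
      using Hk_density_nonneg[OF assms(1)] that by simp
    show "Im \<mu> * Im (D (-x0)) = Im \<mu> * Im (D x0)"
      using \<open>D (-x0) = 0\<close> \<open>D x0 = 0\<close> by simp
  qed
  moreover have "0 < Hk_density k \<Psi> \<Psi>' x1"
    using Hk_density_pos[of x0 x1 k \<Psi>] assms(1,2) x1 by blast
  ultimately show ?thesis
    by simp
qed

lemma eigen_solution_eigenvalue_negative:
  assumes "x0 < 1" "k \<noteq> 0" and sol: "eigen_solution k x0 \<mu> \<Psi> \<Psi>' \<Phi> \<Phi>'"
    and x1: "x1 \<in> {-x0..x0}" "\<Psi> x1 \<noteq> 0"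
  shows "Re \<mu> < 0"
proof (rule ccontr)
  assume "\<not> Re \<mu> < 0"
  obtain D where D: "\<And>x. x \<in> {-x0..x0} \<Longrightarrow>
      (D has_vector_derivative \<mu> * complex_of_real (Hk_density k \<Psi> \<Psi>' x) + complex_of_real ((cmod (\<Phi> x))\<^sup>2))
        (at x within {-x0..x0})"
    and "D (-x0) = 0" "D x0 = 0"
    using eigen_solution_Green_antiderivative[OF sol] by metis
  define E where "E t = complex_of_real (1 - t\<^sup>2) * \<Psi>' t * cnj (\<Psi> t)" for t
  have E: "(E has_vector_derivative \<Phi> x * cnj (\<Psi> x) + complex_of_real (Hk_density k \<Psi> \<Psi>' x))
      (at x within {-x0..x0})" if "x \<in> {-x0..x0}" for x
    unfolding E_def[abs_def] using sol that
    by (intro solves_Lk_energy_identity) (auto simp: eigen_solution_def Lk_system_def)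
  have "E (-x0) = 0" "E x0 = 0"
    using sol unfolding E_def eigen_solution_def by simp_all
  define e where "e = Hk_density k \<Psi> \<Psi>'"
  have e: "0 \<le> e x" if "x \<in> {-x0..x0}" for x
    unfolding e_def using Hk_density_nonneg[OF assms(1) that] .
  have "Re \<mu> * e x + (cmod (\<Phi> x))\<^sup>2 = 0" if "-x0 < x" "x < x0" for x
  proof (rule deriv_zero_if_nonneg_and_endpoints_eq[OF that, where f = "\<lambda>t. Re (D t)"])
    show "((\<lambda>t. Re (D t)) has_real_derivative Re \<mu> * e y + (cmod (\<Phi> y))\<^sup>2) (at y within {-x0..x0})"
      if "y \<in> {-x0..x0}" for y
      using has_field_derivative_Re[OF D[OF that]] unfolding e_def by simp
    show "0 \<le> Re \<mu> * e y + (cmod (\<Phi> y))\<^sup>2" if "-x0 < y" "y < x0" for y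
      using e[of y] that \<open>\<not> Re \<mu> < 0\<close> by simp
    show "Re (D (-x0)) = Re (D x0)"
      using \<open>D (-x0) = 0\<close> \<open>D x0 = 0\<close> by simp
  qed
  moreover have "0 \<le> Re \<mu> * e x" if "-x0 < x" "x < x0" for x
    using e[of x] that \<open>\<not> Re \<mu> < 0\<close> by simp
  ultimately have \<Phi>0: "\<Phi> x = 0" if "-x0 < x" "x < x0" for x
    using that by (metis add_nonneg_eq_0_iff zero_le_power2 zero_eq_power2 norm_eq_zero)
  note x1_interior = eigen_solution_nonzero_interior[OF sol x1]
  have "Re (\<Phi> x1 * cnj (\<Psi> x1)) + e x1 = 0"
  proof (rule deriv_zero_if_nonneg_and_endpoints_eq[OF x1_interior,
        where f = "\<lambda>t. Re (E t)" and f' = "\<lambda>y. Re (\<Phi> y * cnj (\<Psi> y)) + e y"])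
    show "((\<lambda>t. Re (E t)) has_real_derivative Re (\<Phi> y * cnj (\<Psi> y)) + e y) (at y within {-x0..x0})"
      if "y \<in> {-x0..x0}" for y
      using has_field_derivative_Re[OF E[OF that]] unfolding e_def by simp
    show "0 \<le> Re (\<Phi> y * cnj (\<Psi> y)) + e y" if "-x0 < y" "y < x0" for y
      using e[of y] \<Phi>0[OF that] that by simp
    show "Re (E (-x0)) = Re (E x0)"
      using \<open>E (-x0) = 0\<close> \<open>E x0 = 0\<close> by simp
  qed
  moreover have "0 < e x1"
    unfolding e_def using Hk_density_pos[of x0 x1 k \<Psi>] assms(1,2) x1 by blast
  ultimately show False
    using \<Phi>0[OF x1_interior] by simp
qed

lemma is_eigenvalue_real_negative:
  assumes "x0 < 1" "k \<noteq> 0" "is_eigenvalue k x0 \<mu>"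
  shows "Im \<mu> = 0" "Re \<mu> < 0"
proof -
  obtain \<Psi> x1 where \<Psi>: "eigfun k x0 \<mu> \<Psi>" "x1 \<in> {-x0..x0}" "\<Psi> x1 \<noteq> 0"
    using assms(3) unfolding is_eigenvalue_def by blast
  obtain \<Psi>' \<Phi> \<Phi>' where sol: "eigen_solution k x0 \<mu> \<Psi> \<Psi>' \<Phi> \<Phi>'"
    using \<Psi>(1) by (rule eigfun_imp_eigen_solution)
  show "Im \<mu> = 0" "Re \<mu> < 0"
    using eigen_solution_eigenvalue_real[OF assms(1,2) sol \<Psi>(2,3)]
      eigen_solution_eigenvalue_negative[OF assms(1,2) sol \<Psi>(2,3)] by blast+
qed

section \<open>Eigenspaces have dimension at most two\<close>

lemma det2_nonzero_solvable:
  fixes p p' q q' y y' :: "'a::field"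
  assumes "p * q' - p' * q \<noteq> 0"
  obtains a b where "y = a * p + b * q" "y' = a * p' + b * q'"
proof -
  define d where "d = p * q' - p' * q"
  have "d \<noteq> 0"
    using assms by (simp add: d_def)
  have "y = (y * q' - y' * q) / d * p + (p * y' - p' * y) / d * q"
    "y' = (y * q' - y' * q) / d * p' + (p * y' - p' * y) / d * q'"
    using \<open>d \<noteq> 0\<close> by (simp_all add: field_simps) (simp_all add: d_def algebra_simps)
  then show ?thesis
    by (rule that)
qed

lemma det2_nonzero_independent:
  fixes p p' q q' a b :: "'a::field"
  assumes "p * q' - p' * q \<noteq> 0" "a * p + b * q = 0" "a * p' + b * q' = 0"
  shows "a = 0" "b = 0"
proof -
  have "(p * q' - p' * q) * a = q' * (a * p + b * q) - q * (a * p' + b * q')"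
    "(p * q' - p' * q) * b = p * (a * p' + b * q') - p' * (a * p + b * q)"
    by (simp_all add: algebra_simps)
  then show "a = 0" "b = 0"
    using assms by simp_all
qed

lemma det2_zero_dependent:
  fixes p p' y y' :: "'a::field"
  assumes "p * y' - p' * y = 0" "p \<noteq> 0 \<or> p' \<noteq> 0"
  obtains c where "y = c * p" "y' = c * p'"
proof (cases "p = 0")
  case True
  then show ?thesis
    using that[of "y' / p'"] assms by (simp add: field_simps)
next
  case False
  then show ?thesis
    using that[of "y / p"] assms by (simp add: field_simps)
qed

lemma eigen_solution_determined_by_Phi_data:
  assumes "x0 < 1" and \<Theta>: "eigen_solution k x0 \<mu> \<Theta> \<Theta>' \<Xi> \<Xi>'"
    and \<Psi>1: "eigen_solution k x0 \<mu> \<Psi>1 \<Psi>1' \<Phi>1 \<Phi>1'" and \<Psi>2: "eigen_solution k x0 \<mu> \<Psi>2 \<Psi>2' \<Phi>2 \<Phi>2'"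
    and "\<Xi> (-x0) = a * \<Phi>1 (-x0) + b * \<Phi>2 (-x0)" "\<Xi>' (-x0) = a * \<Phi>1' (-x0) + b * \<Phi>2' (-x0)"
    and "x \<in> {-x0..x0}"
  shows "\<Theta> x = a * \<Psi>1 x + b * \<Psi>2 x"
proof -
  have "Lk_system k x0 \<mu> (\<lambda>x. 1 * (1 * \<Theta> x + - a * \<Psi>1 x) + - b * \<Psi>2 x)
      (\<lambda>x. 1 * (1 * \<Theta>' x + - a * \<Psi>1' x) + - b * \<Psi>2' x)
      (\<lambda>x. 1 * (1 * \<Xi> x + - a * \<Phi>1 x) + - b * \<Phi>2 x)
      (\<lambda>x. 1 * (1 * \<Xi>' x + - a * \<Phi>1' x) + - b * \<Phi>2' x)"
    using \<Theta> \<Psi>1 \<Psi>2 unfolding eigen_solution_def by (intro Lk_system_lincomb) auto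
  then have "1 * (1 * \<Theta> x + - a * \<Psi>1 x) + - b * \<Psi>2 x = 0"
    by (rule Lk_system_unique[OF assms(1) _ _ _ _ _ assms(7)])
      (use assms \<Theta> \<Psi>1 \<Psi>2 in \<open>auto simp: eigen_solution_def\<close>)
  then show ?thesis
    by (simp add: algebra_simps)
qed

lemma double_eigenvalue_if_independent_data:
  assumes "0 < x0" "x0 < 1"
    and \<Psi>: "eigfun k x0 \<mu> \<Psi>" "eigen_solution k x0 \<mu> \<Psi> \<Psi>' \<Phi> \<Phi>'"
    and \<Theta>: "eigfun k x0 \<mu> \<Theta>" "eigen_solution k x0 \<mu> \<Theta> \<Theta>' \<Xi> \<Xi>'"
    and det: "\<Phi> (-x0) * \<Xi>' (-x0) - \<Phi>' (-x0) * \<Xi> (-x0) \<noteq> 0"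
  shows "double_eigenvalue k x0 \<mu>"
proof -
  have "a = 0 \<and> b = 0" if "\<forall>x\<in>{-x0..x0}. a * \<Psi> x + b * \<Theta> x = 0" for a b
  proof -
    have vanish: "\<And>x. x \<in> {-x0..x0} \<Longrightarrow> a * \<Psi> x + b * \<Theta> x = 0"
      using that by blast
    have comb: "Lk_system k x0 \<mu> (\<lambda>x. a * \<Psi> x + b * \<Theta> x) (\<lambda>x. a * \<Psi>' x + b * \<Theta>' x)
        (\<lambda>x. a * \<Phi> x + b * \<Xi> x) (\<lambda>x. a * \<Phi>' x + b * \<Xi>' x)"
      using \<Psi>(2) \<Theta>(2) unfolding eigen_solution_def by (intro Lk_system_lincomb) auto
    have "-x0 \<in> {-x0..x0}"
      using assms(1) by simp
    then have "a * \<Phi> (-x0) + b * \<Xi> (-x0) = 0" "a * \<Phi>' (-x0) + b * \<Xi>' (-x0) = 0"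
      using Lk_system_vanishing[OF assms(1) comb vanish] by simp_all
    then show ?thesis
      using det2_nonzero_independent[OF det] by blast
  qed
  moreover have "\<exists>a b. \<forall>x\<in>{-x0..x0}. Z x = a * \<Psi> x + b * \<Theta> x" if "eigfun k x0 \<mu> Z" for Z
  proof -
    obtain Z' Y Y' where Z: "eigen_solution k x0 \<mu> Z Z' Y Y'"
      using \<open>eigfun k x0 \<mu> Z\<close> by (rule eigfun_imp_eigen_solution)
    obtain a b where "Y (-x0) = a * \<Phi> (-x0) + b * \<Xi> (-x0)" "Y' (-x0) = a * \<Phi>' (-x0) + b * \<Xi>' (-x0)"
      using det2_nonzero_solvable[OF det] by blast
    then show ?thesis
      using eigen_solution_determined_by_Phi_data[OF assms(2) Z \<Psi>(2) \<Theta>(2)] by blast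
  qed
  ultimately show ?thesis
    unfolding double_eigenvalue_def using \<Psi>(1) \<Theta>(1) by blast
qed

lemma simple_eigenvalue_if_dependent_data:
  assumes "x0 < 1"
    and \<Psi>: "eigfun k x0 \<mu> \<Psi>" "eigen_solution k x0 \<mu> \<Psi> \<Psi>' \<Phi> \<Phi>'" "x1 \<in> {-x0..x0}" "\<Psi> x1 \<noteq> 0"
    and dependent: "\<And>\<Theta> \<Theta>' \<Xi> \<Xi>'. eigfun k x0 \<mu> \<Theta> \<Longrightarrow> eigen_solution k x0 \<mu> \<Theta> \<Theta>' \<Xi> \<Xi>' \<Longrightarrow>
      \<Phi> (-x0) * \<Xi>' (-x0) - \<Phi>' (-x0) * \<Xi> (-x0) = 0"
  shows "simple_eigenvalue k x0 \<mu>"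
  unfolding simple_eigenvalue_def
proof (intro exI[of _ \<Psi>] conjI allI impI)
  fix Z
  assume "eigfun k x0 \<mu> Z"
  moreover obtain Z' Y Y' where Z: "eigen_solution k x0 \<mu> Z Z' Y Y'"
    using \<open>eigfun k x0 \<mu> Z\<close> by (rule eigfun_imp_eigen_solution)
  ultimately have det: "\<Phi> (-x0) * Y' (-x0) - \<Phi>' (-x0) * Y (-x0) = 0"
    by (rule dependent)
  have "\<Phi> (-x0) \<noteq> 0 \<or> \<Phi>' (-x0) \<noteq> 0"
    using Lk_system_unique[OF assms(1), of k \<mu> \<Psi> \<Psi>' \<Phi> \<Phi>' x1] \<Psi> unfolding eigen_solution_def by auto
  then obtain c where c: "Y (-x0) = c * \<Phi> (-x0)" "Y' (-x0) = c * \<Phi>' (-x0)"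
    using det2_zero_dependent[OF det] by blast
  have "Z x = c * \<Psi> x + 0 * \<Psi> x" if "x \<in> {-x0..x0}" for x
    by (rule eigen_solution_determined_by_Phi_data[OF assms(1) Z \<Psi>(2) \<Psi>(2) _ _ that]) (simp_all add: c)
  then show "\<exists>c. \<forall>x\<in>{-x0..x0}. Z x = c * \<Psi> x"
    by auto
qed (use \<Psi> in auto)

lemma eigenvalue_simple_or_double:
  assumes "0 < x0" "x0 < 1" "is_eigenvalue k x0 \<mu>"
  shows "simple_eigenvalue k x0 \<mu> \<or> double_eigenvalue k x0 \<mu>"
proof -
  obtain \<Psi> x1 where \<Psi>: "eigfun k x0 \<mu> \<Psi>" "x1 \<in> {-x0..x0}" "\<Psi> x1 \<noteq> 0"
    using assms(3) unfolding is_eigenvalue_def by blast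
  obtain \<Psi>' \<Phi> \<Phi>' where sol: "eigen_solution k x0 \<mu> \<Psi> \<Psi>' \<Phi> \<Phi>'"
    using \<Psi>(1) by (rule eigfun_imp_eigen_solution)
  show ?thesis
  proof (cases "\<exists>\<Theta> \<Theta>' \<Xi> \<Xi>'. eigfun k x0 \<mu> \<Theta> \<and> eigen_solution k x0 \<mu> \<Theta> \<Theta>' \<Xi> \<Xi>' \<and>
      \<Phi> (-x0) * \<Xi>' (-x0) - \<Phi>' (-x0) * \<Xi> (-x0) \<noteq> 0")
    case True
    then show ?thesis
      using double_eigenvalue_if_independent_data[OF assms(1,2) \<Psi>(1) sol] by blast
  next
    case False
    then show ?thesis
      using simple_eigenvalue_if_dependent_data[OF assms(2) \<Psi>(1) sol \<Psi>(2,3)] by blast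
  qed
qed

section \<open>Eigenvalues are isolated\<close>

lemma eigen_solutions_orthogonal:
  assumes "0 < x0"
    and a: "eigen_solution k x0 \<mu>a \<Psi>a \<Psi>a' \<Phi>a \<Phi>a'" and b: "eigen_solution k x0 \<mu>b \<Psi>b \<Psi>b' \<Phi>b \<Phi>b'"
    and "cnj \<mu>b \<noteq> \<mu>a"
  shows "((\<lambda>x. \<Phi>a x * cnj (\<Phi>b x)) has_integral 0) {-x0..x0}"
proof -
  have \<Psi>a: "solves_Lk k x0 \<Psi>a \<Psi>a' \<Phi>a" and \<Phi>a: "solves_Lk k x0 \<Phi>a \<Phi>a' (\<lambda>x. \<mu>a * \<Phi>a x)"
    and \<Psi>b: "solves_Lk k x0 \<Psi>b \<Psi>b' \<Phi>b" and \<Phi>b: "solves_Lk k x0 \<Phi>b \<Phi>b' (\<lambda>x. \<mu>b * \<Phi>b x)"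
    using a b unfolding eigen_solution_def Lk_system_def by auto
  (* the mixed terms Psi_a conj Phi_b and Phi_a conj Psi_b of the three brackets cancel in H *)
  define H where "H t = cnj \<mu>b * (\<mu>a * Lk_bracket \<Psi>a \<Psi>a' \<Psi>b \<Psi>b' t - Lk_bracket \<Phi>a \<Phi>a' \<Psi>b \<Psi>b' t)
    - \<mu>a * Lk_bracket \<Psi>a \<Psi>a' \<Phi>b \<Phi>b' t" for t
  have "(H has_vector_derivative (cnj \<mu>b - \<mu>a) * (\<Phi>a x * cnj (\<Phi>b x))) (at x within {-x0..x0})"
    if "x \<in> {-x0..x0}" for x
  proof -
    have "(H has_vector_derivative
        cnj \<mu>b * (\<mu>a * (\<Phi>a x * cnj (\<Psi>b x) - \<Psi>a x * cnj (\<Phi>b x))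
          - (\<mu>a * \<Phi>a x * cnj (\<Psi>b x) - \<Phi>a x * cnj (\<Phi>b x)))
        - \<mu>a * (\<Phi>a x * cnj (\<Phi>b x) - \<Psi>a x * cnj (\<mu>b * \<Phi>b x))) (at x within {-x0..x0})"
      unfolding H_def[abs_def]
      by (intro has_vector_derivative_diff has_vector_derivative_mult_right
          solves_Lk_Lagrange_identity[OF \<Psi>a \<Psi>b that] solves_Lk_Lagrange_identity[OF \<Phi>a \<Psi>b that]
          solves_Lk_Lagrange_identity[OF \<Psi>a \<Phi>b that])
    then show ?thesis
      by (rule has_vector_derivative_eq_rhs) (simp add: algebra_simps)
  qed
  then have "((\<lambda>x. (cnj \<mu>b - \<mu>a) * (\<Phi>a x * cnj (\<Phi>b x))) has_integral H x0 - H (-x0)) {-x0..x0}"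
    using assms(1) by (intro fundamental_theorem_of_calculus) auto
  moreover have "H x0 = 0" "H (-x0) = 0"
    using a b unfolding H_def Lk_bracket_def eigen_solution_def by simp_all
  ultimately show ?thesis
    using \<open>cnj \<mu>b \<noteq> \<mu>a\<close> by (simp add: has_integral_mult_right_iff)
qed

lemma eigen_state_norm_bound:
  assumes "x0 < 1" "solves_Lk k x0 \<Phi> \<Phi>' (\<lambda>x. \<nu> * \<Phi> x)" "cmod \<nu> \<le> M" "x \<in> {-x0..x0}"
  shows "norm (Lk_state \<Phi> \<Phi>' x) \<le> norm (Lk_state \<Phi> \<Phi>' (-x0)) * sqrt (Lk_growth k x0 M)"
proof -
  have "(norm (Lk_state \<Phi> \<Phi>' x))\<^sup>2 \<le> ((norm (Lk_state \<Phi> \<Phi>' (-x0)))\<^sup>2 + 0\<^sup>2) * Lk_growth k x0 M"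
    by (rule solves_Lk_state_bound[OF assms(1,2,3) _ assms(4)]) simp
  then have "norm (Lk_state \<Phi> \<Phi>' x) \<le> sqrt ((norm (Lk_state \<Phi> \<Phi>' (-x0)))\<^sup>2 * Lk_growth k x0 M)"
    by (intro real_le_rsqrt) simp
  then show ?thesis
    by (simp add: real_sqrt_mult)
qed

lemma eigen_state_dist_bound:
  assumes "x0 < 1" "solves_Lk k x0 \<Phi> \<Phi>' (\<lambda>x. \<nu> * \<Phi> x)" "solves_Lk k x0 \<Theta> \<Theta>' (\<lambda>x. \<nu>' * \<Theta> x)"
    and "cmod \<nu> \<le> M" "\<And>x. x \<in> {-x0..x0} \<Longrightarrow> cmod (\<Theta> x) \<le> B" "x \<in> {-x0..x0}"
  shows "dist (Lk_state \<Phi> \<Phi>' x) (Lk_state \<Theta> \<Theta>' x)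
    \<le> (dist (Lk_state \<Phi> \<Phi>' (-x0)) (Lk_state \<Theta> \<Theta>' (-x0)) + dist \<nu> \<nu>' * B) * sqrt (Lk_growth k x0 M)"
proof -
  define D where "D y = dist (Lk_state \<Phi> \<Phi>' y) (Lk_state \<Theta> \<Theta>' y)" for y
  have state_diff: "norm (Lk_state (\<lambda>x. 1 * \<Phi> x + - 1 * \<Theta> x) (\<lambda>x. 1 * \<Phi>' x + - 1 * \<Theta>' x) y) = D y" for y
    by (simp add: D_def dist_norm Lk_state_def algebra_simps)
  have "0 \<le> B"
    using assms(5,6) norm_ge_zero order_trans by blast
  have "0 \<le> Lk_growth k x0 M"
    by (simp add: Lk_growth_def)
  have "(D x)\<^sup>2 \<le> ((D (-x0))\<^sup>2 + (dist \<nu> \<nu>' * B)\<^sup>2) * Lk_growth k x0 M"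
    unfolding state_diff[symmetric]
  proof (rule solves_Lk_state_bound[OF assms(1) solves_Lk_lincomb[OF assms(2,3)] assms(4) _ assms(6)])
    fix y
    assume "y \<in> {-x0..x0}"
    then have "cmod ((\<nu> - \<nu>') * \<Theta> y) \<le> dist \<nu> \<nu>' * B"
      using assms(5) by (simp add: norm_mult dist_norm mult_left_mono)
    then show "cmod (1 * (\<nu> * \<Phi> y) + - 1 * (\<nu>' * \<Theta> y) - \<nu> * (1 * \<Phi> y + - 1 * \<Theta> y)) \<le> dist \<nu> \<nu>' * B"
      by (simp add: algebra_simps)
  qed
  also have "\<dots> \<le> (D (-x0) + dist \<nu> \<nu>' * B)\<^sup>2 * Lk_growth k x0 M"
  proof (rule mult_right_mono[OF _ \<open>0 \<le> Lk_growth k x0 M\<close>])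
    have "0 \<le> 2 * D (-x0) * (dist \<nu> \<nu>' * B)"
      using \<open>0 \<le> B\<close> by (simp add: D_def)
    then show "(D (-x0))\<^sup>2 + (dist \<nu> \<nu>' * B)\<^sup>2 \<le> (D (-x0) + dist \<nu> \<nu>' * B)\<^sup>2"
      unfolding power2_sum by linarith
  qed
  also have "\<dots> = ((D (-x0) + dist \<nu> \<nu>' * B) * sqrt (Lk_growth k x0 M))\<^sup>2"
    using \<open>0 \<le> Lk_growth k x0 M\<close> by (simp add: power_mult_distrib)
  finally have "D x \<le> (D (-x0) + dist \<nu> \<nu>' * B) * sqrt (Lk_growth k x0 M)"
    by (rule power2_le_imp_le) (simp add: D_def \<open>0 \<le> B\<close> \<open>0 \<le> Lk_growth k x0 M\<close>)
  then show ?thesis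
    by (simp add: D_def)
qed

lemma Lk_states_uniformly_Cauchy:
  assumes "x0 < 1" and sol: "\<And>n. solves_Lk k x0 (\<Phi> n) (\<Phi>' n) (\<lambda>x. \<nu> n * \<Phi> n x)"
    and "convergent \<nu>" "convergent (\<lambda>n. Lk_state (\<Phi> n) (\<Phi>' n) (-x0))"
  shows "uniformly_Cauchy_on {-x0..x0} (\<lambda>n. Lk_state (\<Phi> n) (\<Phi>' n))"
proof -
  define d where "d n = Lk_state (\<Phi> n) (\<Phi>' n) (-x0)" for n
  obtain M where M: "\<And>n. cmod (\<nu> n) \<le> M"
    using convergent_imp_Bseq[OF assms(3)] by (auto elim!: BseqE)
  obtain R where R: "\<And>n. norm (d n) \<le> R"
    using convergent_imp_Bseq[OF assms(4)] unfolding d_def by (auto elim!: BseqE)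
  define B where "B = R * sqrt (Lk_growth k x0 M)"
  have bound: "cmod (\<Phi> n x) \<le> B" if "x \<in> {-x0..x0}" for n x
  proof -
    have "cmod (\<Phi> n x) \<le> norm (Lk_state (\<Phi> n) (\<Phi>' n) x)"
      unfolding Lk_state_def by (rule norm_fst_le)
    also have "\<dots> \<le> norm (d n) * sqrt (Lk_growth k x0 M)"
      unfolding d_def by (rule eigen_state_norm_bound[OF assms(1) sol M that])
    also have "\<dots> \<le> B"
      unfolding B_def using R by (intro mult_right_mono) (auto simp: Lk_growth_def)
    finally show ?thesis .
  qed
  have "dist (Lk_state (\<Phi> m) (\<Phi>' m) x) (Lk_state (\<Phi> n) (\<Phi>' n) x)
      \<le> sqrt (Lk_growth k x0 M) * dist (d m) (d n) + (B * sqrt (Lk_growth k x0 M)) * dist (\<nu> m) (\<nu> n)"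
    if "x \<in> {-x0..x0}" for m n x
    using eigen_state_dist_bound[OF assms(1) sol sol M bound that] by (simp add: d_def algebra_simps)
  moreover have "Cauchy d" "Cauchy \<nu>"
    using assms(3,4) unfolding d_def by (simp_all add: convergent_Cauchy)
  ultimately show ?thesis
    by (intro uniformly_Cauchy_on_if_dominated)
qed

lemma uniform_limit_Lk_states:
  assumes "0 < x0" "x0 < 1" and sol: "\<And>n. solves_Lk k x0 (f n) (f' n) (g n)"
    and lim: "uniform_limit {-x0..x0} (\<lambda>n. Lk_state (f n) (f' n)) h sequentially"
  shows "continuous_on {-x0..x0} h"
    and "\<And>x. x \<in> {-x0..x0} \<Longrightarrow> ((\<lambda>x. fst (h x)) has_vector_derivative
      complex_of_real (1 / (1 - x\<^sup>2)) * snd (h x)) (at x within {-x0..x0})"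
proof -
  have "continuous_on {-x0..x0} (f n)" "continuous_on {-x0..x0} (\<lambda>t. complex_of_real (1 - t\<^sup>2) * f' n t)" for n
    using sol[of n] unfolding solves_Lk_def by (auto intro: continuous_on_vector_derivative)
  then have "continuous_on {-x0..x0} (Lk_state (f n) (f' n))" for n
    unfolding Lk_state_def by (intro continuous_on_Pair)
  then show cont: "continuous_on {-x0..x0} h"
    by (intro uniform_limit_theorem[OF _ lim]) simp_all
  have lim_fst: "uniform_limit {-x0..x0} f (\<lambda>x. fst (h x)) sequentially"
    using bounded_linear.uniform_limit[OF bounded_linear_fst lim] by (simp add: Lk_state_def)
  have "uniform_limit {-x0..x0} (\<lambda>n x. complex_of_real (1 - x\<^sup>2) * f' n x) (\<lambda>x. snd (h x)) sequentially"
    using bounded_linear.uniform_limit[OF bounded_linear_snd lim] by (simp add: Lk_state_def)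
  moreover have "bounded ((\<lambda>x. complex_of_real (1 / (1 - x\<^sup>2))) ` {-x0..x0})"
    unfolding bounded_iff using Lk_coeff_bounds(1)[OF assms(2), of _ 0 0]
    by (intro exI[of _ "Lk_coeff_bound k x0 0"]) simp
  moreover have "bounded ((\<lambda>x. snd (h x)) ` {-x0..x0})"
    using cont by (intro compact_imp_bounded compact_continuous_image continuous_intros) auto
  ultimately have ulim: "uniform_limit {-x0..x0}
      (\<lambda>n x. complex_of_real (1 / (1 - x\<^sup>2)) * (complex_of_real (1 - x\<^sup>2) * f' n x))
      (\<lambda>x. complex_of_real (1 / (1 - x\<^sup>2)) * snd (h x)) sequentially"
    by (intro uniform_lim_mult uniform_limit_const)
  have deriv: "\<And>n x. x \<in> {-x0..x0} \<Longrightarrow> (f n has_vector_derivative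
      complex_of_real (1 / (1 - x\<^sup>2)) * (complex_of_real (1 - x\<^sup>2) * f' n x)) (at x within {-x0..x0})"
    using solves_Lk_has_vector_derivative[OF assms(2) sol] .
  have "-x0 \<in> {-x0..x0}"
    using assms(1) by simp
  obtain g' where g': "\<And>x. x \<in> {-x0..x0} \<Longrightarrow> (\<lambda>n. f n x) \<longlonglongrightarrow> g' x"
      "\<And>x. x \<in> {-x0..x0} \<Longrightarrow> (g' has_vector_derivative
        complex_of_real (1 / (1 - x\<^sup>2)) * snd (h x)) (at x within {-x0..x0})"
    using has_vector_derivative_uniform_limit[OF convex_real_interval(5) deriv ulim \<open>-x0 \<in> {-x0..x0}\<close>
        tendsto_uniform_limitI[OF lim_fst \<open>-x0 \<in> {-x0..x0}\<close>]] by blast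
  have g'_eq: "g' x = fst (h x)" if "x \<in> {-x0..x0}" for x
    using LIMSEQ_unique[OF g'(1)[OF that] tendsto_uniform_limitI[OF lim_fst that]] .
  show "((\<lambda>x. fst (h x)) has_vector_derivative
      complex_of_real (1 / (1 - x\<^sup>2)) * snd (h x)) (at x within {-x0..x0})" if "x \<in> {-x0..x0}" for x
    by (rule has_vector_derivative_transform[OF that _ g'(2)[OF that]]) (simp add: g'_eq)
qed

lemma eigen_states_limit_zero:
  assumes "0 < x0" "x0 < 1"
    and sol: "\<And>n. eigen_solution k x0 (\<nu> n) (\<Psi> n) (\<Psi>' n) (\<Phi> n) (\<Phi>' n)"
    and real_eigenvalues: "\<And>n. Im (\<nu> n) = 0" and "convergent \<nu>"
    and distinct: "\<And>N. \<exists>m\<ge>N. \<exists>n\<ge>N. \<nu> m \<noteq> \<nu> n"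
    and data: "(\<lambda>n. Lk_state (\<Phi> n) (\<Phi>' n) (-x0)) \<longlonglongrightarrow> l"
  shows "l = 0"
proof -
  have \<Phi>: "solves_Lk k x0 (\<Phi> n) (\<Phi>' n) (\<lambda>x. \<nu> n * \<Phi> n x)" for n
    using sol unfolding eigen_solution_def Lk_system_def by blast
  obtain h where lim: "uniform_limit {-x0..x0} (\<lambda>n. Lk_state (\<Phi> n) (\<Phi>' n)) h sequentially"
    using Cauchy_uniformly_convergent[OF Lk_states_uniformly_Cauchy[OF assms(2) \<Phi> \<open>convergent \<nu>\<close>]] data
    unfolding uniformly_convergent_on_def convergent_def by blast
  have "-x0 \<in> {-x0..x0}"
    using assms(1) by simp
  have lim_fst: "uniform_limit {-x0..x0} \<Phi> (\<lambda>x. fst (h x)) sequentially"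
    using bounded_linear.uniform_limit[OF bounded_linear_fst lim] by (simp add: Lk_state_def)
  have cont: "continuous_on {-x0..x0} (\<Phi> n)" for n
    using \<Phi>[of n] unfolding solves_Lk_def by (auto intro: continuous_on_vector_derivative)
  have orth: "\<exists>m\<ge>N. \<exists>n\<ge>N. ((\<lambda>x. \<Phi> m x * cnj (\<Phi> n x)) has_integral 0) {-x0..x0}" for N
  proof -
    obtain m n where "N \<le> m" "N \<le> n" "\<nu> m \<noteq> \<nu> n"
      using distinct by blast
    moreover have "cnj (\<nu> n) = \<nu> n"
      using real_eigenvalues[of n] by (simp add: complex_eq_iff)
    ultimately have "((\<lambda>x. \<Phi> m x * cnj (\<Phi> n x)) has_integral 0) {-x0..x0}"
      using eigen_solutions_orthogonal[OF assms(1) sol[of m] sol[of n]] by simp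
    then show ?thesis
      using \<open>N \<le> m\<close> \<open>N \<le> n\<close> by blast
  qed
  have fst0: "fst (h x) = 0" if "x \<in> {-x0..x0}" for x
    by (rule uniform_limit_orthogonal_imp_zero[OF _ lim_fst cont orth that]) (use assms(1) in simp)
  have "complex_of_real (1 / (1 - (-x0)\<^sup>2)) * snd (h (-x0)) = 0"
    by (rule has_vector_derivative_zero_if_vanishing[OF _ \<open>-x0 \<in> {-x0..x0}\<close> fst0
          uniform_limit_Lk_states(2)[OF assms(1,2) \<Phi> lim \<open>-x0 \<in> {-x0..x0}\<close>]])
      (use assms(1) in simp)
  moreover have "complex_of_real (1 / (1 - (-x0)\<^sup>2)) \<noteq> 0"
    using one_minus_power2_bounds(1)[OF assms(2) \<open>-x0 \<in> {-x0..x0}\<close>]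
    by (simp only: of_real_eq_0_iff) simp
  ultimately have "snd (h (-x0)) = 0"
    by simp
  then have "h (-x0) = 0"
    using fst0[OF \<open>-x0 \<in> {-x0..x0}\<close>] by (simp add: prod_eq_iff)
  moreover have "h (-x0) = l"
    using LIMSEQ_unique[OF tendsto_uniform_limitI[OF lim \<open>-x0 \<in> {-x0..x0}\<close>] data] .
  ultimately show ?thesis
    by simp
qed

lemma eigenvalue_normalized_solution:
  assumes "x0 < 1" "is_eigenvalue k x0 \<nu>"
  obtains \<Psi> \<Psi>' \<Phi> \<Phi>' where "eigen_solution k x0 \<nu> \<Psi> \<Psi>' \<Phi> \<Phi>'" "norm (Lk_state \<Phi> \<Phi>' (-x0)) = 1"
proof -
  obtain \<Psi> x1 where \<Psi>: "eigfun k x0 \<nu> \<Psi>" "x1 \<in> {-x0..x0}" "\<Psi> x1 \<noteq> 0"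
    using assms(2) unfolding is_eigenvalue_def by blast
  obtain \<Psi>' \<Phi> \<Phi>' where sol: "eigen_solution k x0 \<nu> \<Psi> \<Psi>' \<Phi> \<Phi>'"
    using \<Psi>(1) by (rule eigfun_imp_eigen_solution)
  have "Lk_state \<Phi> \<Phi>' (-x0) \<noteq> 0"
  proof
    assume "Lk_state \<Phi> \<Phi>' (-x0) = 0"
    moreover have "complex_of_real (1 - (-x0)\<^sup>2) \<noteq> 0"
      using one_minus_power2_bounds(1)[OF assms(1) \<Psi>(2)] by (simp only: of_real_eq_0_iff) simp
    ultimately have "\<Phi> (-x0) = 0" "\<Phi>' (-x0) = 0"
      by (simp_all add: Lk_state_def zero_prod_def)
    then show False
      using Lk_system_unique[OF assms(1), of k \<nu> \<Psi> \<Psi>' \<Phi> \<Phi>' x1] sol \<Psi>(2,3)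
      unfolding eigen_solution_def by simp
  qed
  define c where "c = 1 / norm (Lk_state \<Phi> \<Phi>' (-x0))"
  have "Lk_system k x0 \<nu> (\<lambda>x. complex_of_real c * \<Psi> x + 0 * \<Psi> x) (\<lambda>x. complex_of_real c * \<Psi>' x + 0 * \<Psi>' x)
      (\<lambda>x. complex_of_real c * \<Phi> x + 0 * \<Phi> x) (\<lambda>x. complex_of_real c * \<Phi>' x + 0 * \<Phi>' x)"
    using sol unfolding eigen_solution_def by (intro Lk_system_lincomb) auto
  then have "eigen_solution k x0 \<nu> (\<lambda>x. complex_of_real c * \<Psi> x) (\<lambda>x. complex_of_real c * \<Psi>' x)
      (\<lambda>x. complex_of_real c * \<Phi> x) (\<lambda>x. complex_of_real c * \<Phi>' x)"
    using sol unfolding eigen_solution_def by simp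
  moreover have "Lk_state (\<lambda>x. complex_of_real c * \<Phi> x) (\<lambda>x. complex_of_real c * \<Phi>' x) (-x0)
      = c *\<^sub>R Lk_state \<Phi> \<Phi>' (-x0)"
    by (simp add: Lk_state_def scaleR_conv_of_real)
  then have "norm (Lk_state (\<lambda>x. complex_of_real c * \<Phi> x) (\<lambda>x. complex_of_real c * \<Phi>' x) (-x0)) = 1"
    using \<open>Lk_state \<Phi> \<Phi>' (-x0) \<noteq> 0\<close> by (simp add: c_def)
  ultimately show ?thesis
    by (rule that)
qed

lemma eigenvalues_isolated:
  assumes "0 < x0" "x0 < 1" "k \<noteq> 0"
  shows "\<not> \<mu> islimpt {\<nu>. is_eigenvalue k x0 \<nu>}"
proof
  assume "\<mu> islimpt {\<nu>. is_eigenvalue k x0 \<nu>}"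
  then obtain \<nu> where ev: "\<And>n. is_eigenvalue k x0 (\<nu> n)" and "\<And>n. \<nu> n \<noteq> \<mu>" "\<nu> \<longlonglongrightarrow> \<mu>"
    unfolding islimpt_sequential by auto
  have "\<forall>n. \<exists>\<Psi> \<Psi>' \<Phi> \<Phi>'. eigen_solution k x0 (\<nu> n) \<Psi> \<Psi>' \<Phi> \<Phi>' \<and> norm (Lk_state \<Phi> \<Phi>' (-x0)) = 1"
    using eigenvalue_normalized_solution[OF assms(2) ev] by metis
  then obtain \<Psi> \<Psi>' \<Phi> \<Phi>' where sol: "\<And>n. eigen_solution k x0 (\<nu> n) (\<Psi> n) (\<Psi>' n) (\<Phi> n) (\<Phi>' n)"
    and normalized: "\<And>n. norm (Lk_state (\<Phi> n) (\<Phi>' n) (-x0)) = 1"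
    by metis
  have "bounded (range (\<lambda>n. Lk_state (\<Phi> n) (\<Phi>' n) (-x0)))"
    unfolding bounded_iff using normalized by (intro exI[of _ 1]) simp
  then obtain l r where r: "strict_mono r" and lim: "(\<lambda>n. Lk_state (\<Phi> (r n)) (\<Phi>' (r n)) (-x0)) \<longlonglongrightarrow> l"
    using bounded_imp_convergent_subsequence unfolding o_def by blast
  have "norm l = 1"
    using LIMSEQ_unique[OF tendsto_norm[OF lim]] normalized by simp
  have "(\<lambda>n. \<nu> (r n)) \<longlonglongrightarrow> \<mu>"
    using LIMSEQ_subseq_LIMSEQ[OF \<open>\<nu> \<longlonglongrightarrow> \<mu>\<close> r] by (simp add: o_def)
  have "\<exists>m\<ge>N. \<exists>n\<ge>N. \<nu> (r m) \<noteq> \<nu> (r n)" for N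
    using LIMSEQ_distinct_terms[OF \<open>(\<lambda>n. \<nu> (r n)) \<longlonglongrightarrow> \<mu>\<close>] \<open>\<And>n. \<nu> n \<noteq> \<mu>\<close> by blast
  moreover have "Im (\<nu> (r n)) = 0" for n
    using is_eigenvalue_real_negative(1)[OF assms(2,3) ev] .
  moreover have "convergent (\<lambda>n. \<nu> (r n))"
    using \<open>(\<lambda>n. \<nu> (r n)) \<longlonglongrightarrow> \<mu>\<close> by (rule convergentI)
  ultimately have "l = 0"
    by (intro eigen_states_limit_zero[where \<nu> = "\<lambda>n. \<nu> (r n)" and \<Psi> = "\<lambda>n. \<Psi> (r n)"
          and \<Psi>' = "\<lambda>n. \<Psi>' (r n)" and \<Phi> = "\<lambda>n. \<Phi> (r n)" and \<Phi>' = "\<lambda>n. \<Phi>' (r n)",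
          OF assms(1,2) sol _ _ _ lim])
  then show False
    using \<open>norm l = 1\<close> by simp
qed

theorem proposition3:
  fixes k :: int and x0 :: real
  assumes "k \<noteq> 0" and "0 < x0" and "x0 < 1"
  shows "\<forall>\<mu>. is_eigenvalue k x0 \<mu> \<longrightarrow>
           \<not> (\<mu> islimpt {\<nu>. is_eigenvalue k x0 \<nu>}) \<and>
           \<mu> \<in> \<real> \<and> Re \<mu> < 0 \<and>
           (simple_eigenvalue k x0 \<mu> \<or> double_eigenvalue k x0 \<mu>)"
proof (intro allI impI)
  fix \<mu>
  assume ev: "is_eigenvalue k x0 \<mu>"
  show "\<not> (\<mu> islimpt {\<nu>. is_eigenvalue k x0 \<nu>}) \<and> \<mu> \<in> \<real> \<and> Re \<mu> < 0 \<and>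
      (simple_eigenvalue k x0 \<mu> \<or> double_eigenvalue k x0 \<mu>)"
    using eigenvalues_isolated[OF assms(2,3,1)] is_eigenvalue_real_negative[OF assms(3,1) ev]
      eigenvalue_simple_or_double[OF assms(2,3) ev]
    by (simp add: complex_is_Real_iff)
qed

end
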